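(* Let $R$ be a principal ideal domain, $M$ a faithful primeful $R$-module having at least one prime submodule, $X=\mathrm{Spec}(M)$, $N$ an $R$-module, $K\le M$, and $U=X\setminus V(K)$. Then there exists $a\in R$ such that $\mathcal{A}(N,M)(U)\cong N_a$.
   Context: For a submodule $L$ of an $R$-module $M$, $(L:M)=\{r\in R\mid rM\subseteq L\}$. A submodule $P$ of $M$ is prime if $P\neq M$ and whenever $rm\in P$ ($r\in R$, $m\in M$) then $r\in (P:M)$ or $m\in P$. $\mathrm{Spec}(M)$ is the set of prime submodules. $M$ is faithful if $\mathrm{Ann}_R(M)=0$; primeful if $M=0$ or $\mathrm{Spec}(M)\to\mathrm{Spec}(R/\mathrm{Ann}(M))$, $P\mapsto(P:M)/\mathrm{Ann}(M)$, is surjective. For $L\le M$, $V(L)=\{P\in X\mid (P:M)\supseteq (L:M)\}$; these are the closed sets of the Zariski topology. For open $U\subseteq X$, $\mathrm{Supp}(U)=\{(P:M)\mid P\in U\}$. $\mathcal{A}(N,M)(U)$ is the $R$-module of families $(\gamma_{\mathfrak p})_{\mathfrak p\in\mathrm{Supp}(U)}\in\prod_{\mathfrak p\in\mathrm{Supp}(U)}N_{\mathfrak p}$ such that for each $Q\in U$ there exist an open neighbourhood $W\subseteq U$ of $Q$ and $s\in R$, $m\in N$ with $s\notin(P:M)$ and $\gamma_{(P:M)}=m/s$ for every $P\in W$. $N_a$ denotes the localization of $N$ at the multiplicative set $\{a^n\mid n\ge0\}$. *)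

theory Defs
  imports Main "HOL.Modules"
begin

definition r_ideal :: "'r::comm_ring_1 set \<Rightarrow> bool" where
  "r_ideal I \<longleftrightarrow> 0 \<in> I \<and> (\<forall>x\<in>I. \<forall>y\<in>I. x + y \<in> I) \<and> (\<forall>r. \<forall>x\<in>I. r * x \<in> I)"

definition prime_ideal :: "'r::comm_ring_1 set \<Rightarrow> bool" where
  "prime_ideal p \<longleftrightarrow> r_ideal p \<and> p \<noteq> UNIV \<and> (\<forall>a b. a * b \<in> p \<longrightarrow> a \<in> p \<or> b \<in> p)"

definition is_pid :: "'r::idom itself \<Rightarrow> bool" where
  "is_pid _ \<longleftrightarrow> (\<forall>I::'r set. r_ideal I \<longrightarrow> (\<exists>a. I = range (\<lambda>r. r * a)))"

definition is_module :: "('r::comm_ring_1 \<Rightarrow> 'm::ab_group_add \<Rightarrow> 'm) \<Rightarrow> bool" where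
  "is_module sc \<longleftrightarrow> module sc"

definition submod :: "('r::comm_ring_1 \<Rightarrow> 'm::ab_group_add \<Rightarrow> 'm) \<Rightarrow> 'm set \<Rightarrow> bool" where
  "submod sc L \<longleftrightarrow> 0 \<in> L \<and> (\<forall>x\<in>L. \<forall>y\<in>L. x + y \<in> L) \<and> (\<forall>c. \<forall>x\<in>L. sc c x \<in> L)"

text \<open>The module M is the whole type 'm with scalar multiplication sc.\<close>

definition colon :: "('r::comm_ring_1 \<Rightarrow> 'm::ab_group_add \<Rightarrow> 'm) \<Rightarrow> 'm set \<Rightarrow> 'r set" where
  "colon sc L = {r. \<forall>m. sc r m \<in> L}"

definition annih :: "('r::comm_ring_1 \<Rightarrow> 'm::ab_group_add \<Rightarrow> 'm) \<Rightarrow> 'r set" where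
  "annih sc = {r. \<forall>m. sc r m = 0}"

definition prime_submodule :: "('r::comm_ring_1 \<Rightarrow> 'm::ab_group_add \<Rightarrow> 'm) \<Rightarrow> 'm set \<Rightarrow> bool" where
  "prime_submodule sc P \<longleftrightarrow> submod sc P \<and> P \<noteq> UNIV \<and>
     (\<forall>r m. sc r m \<in> P \<longrightarrow> r \<in> colon sc P \<or> m \<in> P)"

definition mSpec :: "('r::comm_ring_1 \<Rightarrow> 'm::ab_group_add \<Rightarrow> 'm) \<Rightarrow> 'm set set" where
  "mSpec sc = {P. prime_submodule sc P}"

definition faithful :: "('r::comm_ring_1 \<Rightarrow> 'm::ab_group_add \<Rightarrow> 'm) \<Rightarrow> bool" where
  "faithful sc \<longleftrightarrow> annih sc = {0}"

text \<open>Primeful: M = 0, or P \<mapsto> (P:M)/Ann(M) maps Spec(M) onto Spec(R/Ann(M)). Prime ideals of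
  R/Ann(M) are identified with the prime ideals of R containing Ann(M) (correspondence theorem).\<close>
definition primeful :: "('r::comm_ring_1 \<Rightarrow> 'm::ab_group_add \<Rightarrow> 'm) \<Rightarrow> bool" where
  "primeful sc \<longleftrightarrow> (UNIV::'m set) = {0} \<or>
     (\<forall>p. prime_ideal p \<and> annih sc \<subseteq> p \<longrightarrow> (\<exists>P\<in>mSpec sc. colon sc P = p))"

definition zV :: "('r::comm_ring_1 \<Rightarrow> 'm::ab_group_add \<Rightarrow> 'm) \<Rightarrow> 'm set \<Rightarrow> 'm set set" where
  "zV sc L = {P \<in> mSpec sc. colon sc L \<subseteq> colon sc P}"

definition zopen :: "('r::comm_ring_1 \<Rightarrow> 'm::ab_group_add \<Rightarrow> 'm) \<Rightarrow> 'm set set \<Rightarrow> bool" where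
  "zopen sc W \<longleftrightarrow> (\<exists>L. submod sc L \<and> W = mSpec sc - zV sc L)"

definition Supp :: "('r::comm_ring_1 \<Rightarrow> 'm::ab_group_add \<Rightarrow> 'm) \<Rightarrow> 'm set set \<Rightarrow> 'r set set" where
  "Supp sc U = (\<lambda>P. colon sc P) ` U"

definition loc_rel :: "('r::comm_ring_1 \<Rightarrow> 'n::ab_group_add \<Rightarrow> 'n) \<Rightarrow> 'r set \<Rightarrow> (('n \<times> 'r) \<times> ('n \<times> 'r)) set" where
  "loc_rel sc S = {((n, s), (n', s')). s \<in> S \<and> s' \<in> S \<and> (\<exists>t\<in>S. sc t (sc s' n - sc s n') = 0)}"

definition frac :: "('r::comm_ring_1 \<Rightarrow> 'n::ab_group_add \<Rightarrow> 'n) \<Rightarrow> 'r set \<Rightarrow> 'n \<Rightarrow> 'r \<Rightarrow> ('n \<times> 'r) set" where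
  "frac sc S n s = loc_rel sc S `` {(n, s)}"

definition loc_carrier :: "('r::comm_ring_1 \<Rightarrow> 'n::ab_group_add \<Rightarrow> 'n) \<Rightarrow> 'r set \<Rightarrow> ('n \<times> 'r) set set" where
  "loc_carrier sc S = {frac sc S n s | n s. s \<in> S}"

definition loc_add :: "('r::comm_ring_1 \<Rightarrow> 'n::ab_group_add \<Rightarrow> 'n) \<Rightarrow> 'r set \<Rightarrow> ('n \<times> 'r) set \<Rightarrow> ('n \<times> 'r) set \<Rightarrow> ('n \<times> 'r) set" where
  "loc_add sc S x y = \<Union>{frac sc S (sc s' n + sc s n') (s * s') | n s n' s'. (n, s) \<in> x \<and> (n', s') \<in> y}"

definition loc_scale :: "('r::comm_ring_1 \<Rightarrow> 'n::ab_group_add \<Rightarrow> 'n) \<Rightarrow> 'r set \<Rightarrow> 'r \<Rightarrow> ('n \<times> 'r) set \<Rightarrow> ('n \<times> 'r) set" where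
  "loc_scale sc S r x = \<Union>{frac sc S (sc r n) s | n s. (n, s) \<in> x}"

abbreviation S_prime :: "'r::comm_ring_1 set \<Rightarrow> 'r set" where
  "S_prime p \<equiv> - p"

abbreviation S_pow :: "'r::comm_ring_1 \<Rightarrow> 'r set" where
  "S_pow a \<equiv> range (\<lambda>k::nat. a ^ k)"

text \<open>Families (\<gamma>_p)_{p \<in> Supp(U)} are represented as functions that are {} off Supp(U).\<close>
definition sections ::
  "('r::comm_ring_1 \<Rightarrow> 'm::ab_group_add \<Rightarrow> 'm) \<Rightarrow> ('r \<Rightarrow> 'n::ab_group_add \<Rightarrow> 'n) \<Rightarrow> 'm set set
     \<Rightarrow> ('r set \<Rightarrow> ('n \<times> 'r) set) set" where
  "sections scM scN U = {\<gamma>.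
     (\<forall>p\<in>Supp scM U. \<gamma> p \<in> loc_carrier scN (S_prime p)) \<and>
     (\<forall>p. p \<notin> Supp scM U \<longrightarrow> \<gamma> p = {}) \<and>
     (\<forall>Q\<in>U. \<exists>W. zopen scM W \<and> Q \<in> W \<and> W \<subseteq> U \<and>
        (\<exists>s n. \<forall>P\<in>W. s \<notin> colon scM P \<and>
               \<gamma> (colon scM P) = frac scN (S_prime (colon scM P)) n s))}"

definition sec_add ::
  "('r::comm_ring_1 \<Rightarrow> 'm::ab_group_add \<Rightarrow> 'm) \<Rightarrow> ('r \<Rightarrow> 'n::ab_group_add \<Rightarrow> 'n) \<Rightarrow> 'm set set
     \<Rightarrow> ('r set \<Rightarrow> ('n \<times> 'r) set) \<Rightarrow> ('r set \<Rightarrow> ('n \<times> 'r) set) \<Rightarrow> ('r set \<Rightarrow> ('n \<times> 'r) set)" where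
  "sec_add scM scN U \<gamma> \<delta> = (\<lambda>p. if p \<in> Supp scM U then loc_add scN (S_prime p) (\<gamma> p) (\<delta> p) else {})"

definition sec_scale ::
  "('r::comm_ring_1 \<Rightarrow> 'm::ab_group_add \<Rightarrow> 'm) \<Rightarrow> ('r \<Rightarrow> 'n::ab_group_add \<Rightarrow> 'n) \<Rightarrow> 'm set set
     \<Rightarrow> 'r \<Rightarrow> ('r set \<Rightarrow> ('n \<times> 'r) set) \<Rightarrow> ('r set \<Rightarrow> ('n \<times> 'r) set)" where
  "sec_scale scM scN U r \<gamma> = (\<lambda>p. if p \<in> Supp scM U then loc_scale scN (S_prime p) r (\<gamma> p) else {})"

definition sections_iso_loc ::
  "('r::comm_ring_1 \<Rightarrow> 'm::ab_group_add \<Rightarrow> 'm) \<Rightarrow> ('r \<Rightarrow> 'n::ab_group_add \<Rightarrow> 'n) \<Rightarrow> 'm set set \<Rightarrow> 'r \<Rightarrow> bool" where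
  "sections_iso_loc scM scN U a \<longleftrightarrow> (\<exists>f.
     bij_betw f (sections scM scN U) (loc_carrier scN (S_pow a)) \<and>
     (\<forall>\<gamma>\<in>sections scM scN U. \<forall>\<delta>\<in>sections scM scN U.
        f (sec_add scM scN U \<gamma> \<delta>) = loc_add scN (S_pow a) (f \<gamma>) (f \<delta>)) \<and>
     (\<forall>r. \<forall>\<gamma>\<in>sections scM scN U.
        f (sec_scale scM scN U r \<gamma>) = loc_scale scN (S_pow a) r (f \<gamma>)))"

end

theory Submission
  imports Defs
begin

text \<open>Since \<open>R\<close> is a PID, \<open>(K:M) = (a)\<close> for some \<open>a\<close>, and as \<open>P \<mapsto> (P:M)\<close> maps \<open>Spec(M)\<close>
  onto \<open>Spec(R)\<close>, the support of \<open>U\<close> is the basic open set \<open>D(a)\<close> of primes not containing \<open>a\<close>;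
  likewise every open set of \<open>Spec(M)\<close> is the preimage of some \<open>D(b)\<close>. Each fraction \<open>m/a^k\<close> of
  \<open>N\<^sub>a\<close> gives the section \<open>p \<mapsto> m/a^k\<close>, and two of them coincide iff they coincide in \<open>N\<^sub>a\<close>:
  a difference killed in every localization at \<open>p \<in> D(a)\<close> is killed by a power of \<open>a\<close>.
  Conversely, for a section \<open>\<gamma>\<close> the elements \<open>x\<close> such that \<open>\<gamma>\<close> is a single fraction on
  \<open>D(x)\<close> form an ideal: two fractions that agree on \<open>D(x) \<inter> D(y)\<close> glue to one on \<open>D(x + y)\<close>,
  the gluing coefficients coming from a power of \<open>x + y\<close> in the ideal of the two denominators.
  No prime of \<open>D(a)\<close> contains this ideal, so it contains a power of \<open>a\<close>, and \<open>\<gamma>\<close> is a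
  single fraction \<open>m/a^k\<close> on all of \<open>D(a)\<close>.\<close>

section \<open>Localization of a module\<close>

definition mult_submonoid :: "'r::comm_ring_1 set \<Rightarrow> bool" where
  "mult_submonoid S \<longleftrightarrow> 1 \<in> S \<and> (\<forall>x\<in>S. \<forall>y\<in>S. x * y \<in> S)"

lemma mult_submonoid_powers: "mult_submonoid (S_pow a)"
  unfolding mult_submonoid_def by (metis (mono_tags, lifting) power_0 power_add rangeE rangeI)

context module
begin

lemma loc_rel_equiv:
  assumes "mult_submonoid S"
  shows "equiv (UNIV \<times> S) (loc_rel scale S)"
proof (rule equivI)
  have one: "1 \<in> S" and mult: "\<And>x y. x \<in> S \<Longrightarrow> y \<in> S \<Longrightarrow> x * y \<in> S"
    using assms by (auto simp: mult_submonoid_def)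
  show "loc_rel scale S \<subseteq> (UNIV \<times> S) \<times> UNIV \<times> S"
    unfolding loc_rel_def by auto
  show "refl_on (UNIV \<times> S) (loc_rel scale S)"
    unfolding refl_on_def loc_rel_def using one by force
  show "sym (loc_rel scale S)"
  proof (rule symI)
    fix x y assume "(x, y) \<in> loc_rel scale S"
    then obtain n s n' s' t where "x = (n, s)" "y = (n', s')" "s \<in> S" "s' \<in> S" "t \<in> S"
      "t *s (s' *s n - s *s n') = 0"
      unfolding loc_rel_def by auto
    moreover have "t *s (s *s n' - s' *s n) = - (t *s (s' *s n - s *s n'))"
      by (simp add: algebra_simps)
    ultimately show "(y, x) \<in> loc_rel scale S"
      unfolding loc_rel_def by auto
  qed
  show "trans (loc_rel scale S)"
  proof (rule transI)
    fix x y z assume "(x, y) \<in> loc_rel scale S" "(y, z) \<in> loc_rel scale S"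
    then obtain n s n1 s1 n2 s2 t u where xyz: "x = (n, s)" "y = (n1, s1)" "z = (n2, s2)"
      "s \<in> S" "s1 \<in> S" "s2 \<in> S" "t \<in> S" "u \<in> S"
      "t *s (s1 *s n - s *s n1) = 0" "u *s (s2 *s n1 - s1 *s n2) = 0"
      unfolding loc_rel_def by auto
    have "(t * u * s1) *s (s2 *s n - s *s n2)
        = (u * s2) *s (t *s (s1 *s n - s *s n1)) + (t * s) *s (u *s (s2 *s n1 - s1 *s n2))"
      by (simp add: algebra_simps)
    also have "\<dots> = 0"
      using xyz by simp
    finally show "(x, z) \<in> loc_rel scale S"
      using xyz mult unfolding loc_rel_def by blast
  qed
qed

lemma frac_eq_iff:
  assumes "mult_submonoid S" "s \<in> S" "s' \<in> S"
  shows "frac scale S n s = frac scale S n' s' \<longleftrightarrow> (\<exists>t\<in>S. t *s (s' *s n - s *s n') = 0)"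
proof -
  have "frac scale S n s = frac scale S n' s' \<longleftrightarrow> ((n, s), (n', s')) \<in> loc_rel scale S"
    unfolding frac_def using eq_equiv_class_iff[OF loc_rel_equiv[OF assms(1)]] assms(2,3) by auto
  then show ?thesis
    using assms(2,3) unfolding loc_rel_def by auto
qed

lemma frac_eqI:
  assumes "mult_submonoid S" "s \<in> S" "s' \<in> S" "s' *s n = s *s n'"
  shows "frac scale S n s = frac scale S n' s'"
  using assms frac_eq_iff[OF assms(1-3)] by (force simp: mult_submonoid_def)

lemma frac_self_mem:
  assumes "mult_submonoid S" "s \<in> S"
  shows "(n, s) \<in> frac scale S n s"
  using loc_rel_equiv[OF assms(1)] assms(2) unfolding frac_def equiv_def refl_on_def by auto

lemma loc_add_frac:
  assumes S: "mult_submonoid S" and s: "s \<in> S" "s' \<in> S"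
  shows "loc_add scale S (frac scale S n s) (frac scale S n' s') = frac scale S (s' *s n + s *s n') (s * s')"
proof -
  have mult: "\<And>x y. x \<in> S \<Longrightarrow> y \<in> S \<Longrightarrow> x * y \<in> S"
    using S by (auto simp: mult_submonoid_def)
  have "frac scale S (s' *s n + s *s n') (s * s') = frac scale S (s2 *s n1 + s1 *s n2) (s1 * s2)"
    if m1: "(n1, s1) \<in> frac scale S n s" and m2: "(n2, s2) \<in> frac scale S n' s'" for n1 s1 n2 s2
  proof -
    obtain t1 where t1: "s1 \<in> S" "t1 \<in> S" "t1 *s (s1 *s n - s *s n1) = 0"
      using m1 unfolding frac_def loc_rel_def by blast
    obtain t2 where t2: "s2 \<in> S" "t2 \<in> S" "t2 *s (s2 *s n' - s' *s n2) = 0"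
      using m2 unfolding frac_def loc_rel_def by blast
    have "(t1 * t2) *s ((s1 * s2) *s (s' *s n + s *s n') - (s * s') *s (s2 *s n1 + s1 *s n2))
        = (t2 * s' * s2) *s (t1 *s (s1 *s n - s *s n1)) + (t1 * s * s1) *s (t2 *s (s2 *s n' - s' *s n2))"
      by (simp add: algebra_simps)
    also have "\<dots> = 0"
      using t1 t2 by simp
    finally show ?thesis
      using frac_eq_iff[OF S mult[OF s] mult[OF t1(1) t2(1)]] mult[OF t1(2) t2(2)] by blast
  qed
  then have "{frac scale S (s2 *s n1 + s1 *s n2) (s1 * s2) | n1 s1 n2 s2.
      (n1, s1) \<in> frac scale S n s \<and> (n2, s2) \<in> frac scale S n' s'} = {frac scale S (s' *s n + s *s n') (s * s')}"
    using frac_self_mem[OF S s(1)] frac_self_mem[OF S s(2)] by blast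
  then show ?thesis
    unfolding loc_add_def by simp
qed

lemma loc_scale_frac:
  assumes S: "mult_submonoid S" and s: "s \<in> S"
  shows "loc_scale scale S r (frac scale S n s) = frac scale S (r *s n) s"
proof -
  have "frac scale S (r *s n) s = frac scale S (r *s n1) s1" if m: "(n1, s1) \<in> frac scale S n s" for n1 s1
  proof -
    obtain t where t: "s1 \<in> S" "t \<in> S" "t *s (s1 *s n - s *s n1) = 0"
      using m unfolding frac_def loc_rel_def by blast
    have "t *s (s1 *s (r *s n) - s *s (r *s n1)) = r *s (t *s (s1 *s n - s *s n1))"
      by (simp add: algebra_simps)
    then show ?thesis
      using frac_eq_iff[OF S s t(1)] t by auto
  qed
  then have "{frac scale S (r *s n1) s1 | n1 s1. (n1, s1) \<in> frac scale S n s} = {frac scale S (r *s n) s}"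
    using frac_self_mem[OF S s] by blast
  then show ?thesis
    unfolding loc_scale_def by simp
qed

end

section \<open>Ideals, prime ideals and the radical\<close>

lemma r_ideal_zero: "r_ideal I \<Longrightarrow> 0 \<in> I"
  and r_ideal_add: "r_ideal I \<Longrightarrow> x \<in> I \<Longrightarrow> y \<in> I \<Longrightarrow> x + y \<in> I"
  and r_ideal_mult_left: "r_ideal I \<Longrightarrow> x \<in> I \<Longrightarrow> r * x \<in> I"
  and r_ideal_mult_right: "r_ideal I \<Longrightarrow> x \<in> I \<Longrightarrow> x * r \<in> I"
  unfolding r_ideal_def by (auto simp: mult.commute)

lemma r_ideal_principal: "r_ideal (range (\<lambda>r. r * a))"
  unfolding r_ideal_def
proof (intro conjI ballI allI)
  show "0 \<in> range (\<lambda>r. r * a)"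
    by (rule range_eqI[of _ _ 0]) simp
next
  fix x y assume "x \<in> range (\<lambda>r. r * a)" "y \<in> range (\<lambda>r. r * a)"
  then obtain u v where "x = u * a" "y = v * a"
    by blast
  then show "x + y \<in> range (\<lambda>r. r * a)"
    by (intro range_eqI[of _ _ "u + v"]) (simp add: distrib_right)
next
  fix r x assume "x \<in> range (\<lambda>r. r * a)"
  then obtain u where "x = u * a"
    by blast
  then show "r * x \<in> range (\<lambda>r. r * a)"
    by (intro range_eqI[of _ _ "r * u"]) (simp add: mult.assoc)
qed

definition ideal_adjoin :: "'r::comm_ring_1 set \<Rightarrow> 'r \<Rightarrow> 'r set" where
  "ideal_adjoin I x = {q + r * x | q r. q \<in> I}"

lemma r_ideal_ideal_adjoin:
  assumes "r_ideal I"
  shows "r_ideal (ideal_adjoin I x)"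
  unfolding r_ideal_def ideal_adjoin_def
proof (intro conjI ballI allI)
  have "0 = 0 + 0 * x"
    by simp
  then show "0 \<in> {q + r * x | q r. q \<in> I}"
    using r_ideal_zero[OF assms] by blast
next
  fix u v assume "u \<in> {q + r * x | q r. q \<in> I}" "v \<in> {q + r * x | q r. q \<in> I}"
  then obtain q1 r1 q2 r2 where "u = q1 + r1 * x" "v = q2 + r2 * x" "q1 \<in> I" "q2 \<in> I"
    by blast
  then have "u + v = (q1 + q2) + (r1 + r2) * x" "q1 + q2 \<in> I"
    using r_ideal_add[OF assms] by (auto simp: algebra_simps)
  then show "u + v \<in> {q + r * x | q r. q \<in> I}"
    by blast
next
  fix c u assume "u \<in> {q + r * x | q r. q \<in> I}"
  then obtain q r where "u = q + r * x" "q \<in> I"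
    by blast
  moreover have "c * q \<in> I"
    using r_ideal_mult_left[OF assms \<open>q \<in> I\<close>] .
  ultimately have "c * u = c * q + (c * r) * x" "c * q \<in> I"
    by (auto simp: algebra_simps)
  then show "c * u \<in> {q + r * x | q r. q \<in> I}"
    by blast
qed

lemma subset_ideal_adjoin: "I \<subseteq> ideal_adjoin I x"
proof
  fix q assume "q \<in> I"
  moreover have "q = q + 0 * x"
    by simp
  ultimately show "q \<in> ideal_adjoin I x"
    unfolding ideal_adjoin_def by blast
qed

lemma mem_ideal_adjoin: "0 \<in> I \<Longrightarrow> x \<in> ideal_adjoin I x"
proof -
  assume "0 \<in> I"
  moreover have "x = 0 + 1 * x"
    by simp
  ultimately show "x \<in> ideal_adjoin I x"
    unfolding ideal_adjoin_def by blast
qed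

lemma r_ideal_Union_chain:
  assumes "C \<noteq> {}" and ideals: "\<And>I. I \<in> C \<Longrightarrow> r_ideal I"
    and chain: "\<And>I J. I \<in> C \<Longrightarrow> J \<in> C \<Longrightarrow> I \<subseteq> J \<or> J \<subseteq> I"
  shows "r_ideal (\<Union>C)"
  unfolding r_ideal_def
proof (intro conjI ballI allI)
  show "0 \<in> \<Union>C"
    using assms(1) ideals r_ideal_zero by blast
next
  fix x y assume "x \<in> \<Union>C" "y \<in> \<Union>C"
  then obtain I J where "I \<in> C" "J \<in> C" "x \<in> I" "y \<in> J"
    by blast
  then show "x + y \<in> \<Union>C"
    using chain[of I J] ideals r_ideal_add by blast
next
  fix r x assume "x \<in> \<Union>C"
  then show "r * x \<in> \<Union>C"
    using ideals r_ideal_mult_left by blast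
qed

lemma prime_idealD:
  assumes "prime_ideal p"
  shows "r_ideal p" and "1 \<notin> p" and "x * y \<in> p \<Longrightarrow> x \<in> p \<or> y \<in> p"
  using assms unfolding prime_ideal_def r_ideal_def by (metis UNIV_eq_I mult.right_neutral)+

lemma prime_ideal_power_not_mem: "prime_ideal p \<Longrightarrow> x \<notin> p \<Longrightarrow> x ^ k \<notin> p"
  by (induction k) (auto dest: prime_idealD)

lemma mult_submonoid_compl_prime: "prime_ideal p \<Longrightarrow> mult_submonoid (- p)"
  unfolding mult_submonoid_def by (auto dest: prime_idealD)

lemma maximal_ideal_avoiding_powers_prime:
  assumes P: "r_ideal P" "\<And>n. z ^ n \<notin> P"
    and max: "\<And>I. r_ideal I \<Longrightarrow> P \<subseteq> I \<Longrightarrow> \<forall>n. z ^ n \<notin> I \<Longrightarrow> I = P"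
  shows "prime_ideal P"
proof -
  have escape: "\<exists>i. z ^ i \<in> ideal_adjoin P x" if "x \<notin> P" for x
    using max[OF r_ideal_ideal_adjoin[OF P(1)] subset_ideal_adjoin] that
      mem_ideal_adjoin[OF r_ideal_zero[OF P(1)]] by blast
  have "x \<in> P \<or> y \<in> P" if xy: "x * y \<in> P" for x y
  proof (rule ccontr)
    assume "\<not> (x \<in> P \<or> y \<in> P)"
    then obtain i j q1 r1 q2 r2 where "z ^ i = q1 + r1 * x" "z ^ j = q2 + r2 * y" "q1 \<in> P" "q2 \<in> P"
      using escape unfolding ideal_adjoin_def by blast
    then have "z ^ (i + j) = q1 * (q2 + r2 * y) + q2 * (r1 * x) + (r1 * r2) * (x * y)"
      by (simp add: power_add algebra_simps)
    also have "\<dots> \<in> P"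
      using \<open>q1 \<in> P\<close> \<open>q2 \<in> P\<close> xy r_ideal_add[OF P(1)] r_ideal_mult_left[OF P(1)]
        r_ideal_mult_right[OF P(1)] by metis
    finally show False
      using P(2) by blast
  qed
  moreover have "P \<noteq> UNIV"
    using P(2)[of 0] by auto
  ultimately show ?thesis
    unfolding prime_ideal_def using P(1) by blast
qed

lemma ex_prime_ideal_avoiding_powers:
  assumes J: "r_ideal J" and avoid: "\<And>n. z ^ n \<notin> J"
  shows "\<exists>p. prime_ideal p \<and> J \<subseteq> p \<and> z \<notin> p"
proof -
  let ?A = "{I. r_ideal I \<and> J \<subseteq> I \<and> (\<forall>n. z ^ n \<notin> I)}"
  have "\<exists>P\<in>?A. \<forall>I\<in>?A. P \<subseteq> I \<longrightarrow> I = P"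
  proof (rule Zorn_Lemma2, intro ballI)
    fix C assume C: "C \<in> chains ?A"
    show "\<exists>U\<in>?A. \<forall>I\<in>C. I \<subseteq> U"
    proof (cases "C = {}")
      case True
      then show ?thesis
        using J avoid by auto
    next
      case False
      have CA: "C \<subseteq> ?A" and "\<And>I J. I \<in> C \<Longrightarrow> J \<in> C \<Longrightarrow> I \<subseteq> J \<or> J \<subseteq> I"
        using C unfolding chains_def chain_subset_def by auto
      then have "r_ideal (\<Union>C)"
        using r_ideal_Union_chain[OF False] by blast
      then have "\<Union>C \<in> ?A"
        using False CA by blast
      then show ?thesis
        by blast
    qed
  qed
  then obtain P where "P \<in> ?A" and max: "\<forall>I\<in>?A. P \<subseteq> I \<longrightarrow> I = P"
    by blast
  then have P: "r_ideal P" "J \<subseteq> P" "\<And>n. z ^ n \<notin> P"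
    by auto
  have "prime_ideal P"
  proof (rule maximal_ideal_avoiding_powers_prime[OF P(1,3)])
    fix I assume "r_ideal I" "P \<subseteq> I" "\<forall>n. z ^ n \<notin> I"
    then show "I = P"
      using max P(2) by blast
  qed
  moreover have "z \<notin> P"
    using P(3)[of 1] by simp
  ultimately show ?thesis
    using P(2) by blast
qed

lemma ex_power_mem_if_mem_primes:
  assumes "r_ideal J" "\<And>p. prime_ideal p \<Longrightarrow> J \<subseteq> p \<Longrightarrow> z \<in> p"
  shows "\<exists>n. z ^ n \<in> J"
  using ex_prime_ideal_avoiding_powers assms by blast

definition basic_open :: "'r::comm_ring_1 \<Rightarrow> 'r set set" where
  "basic_open x = {p. prime_ideal p \<and> x \<notin> p}"

lemma basic_open_zero: "basic_open 0 = {}"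
  unfolding basic_open_def using prime_idealD(1) r_ideal_zero by blast

lemma basic_open_mult_left: "basic_open (r * x) \<subseteq> basic_open x"
  unfolding basic_open_def using prime_idealD(1) r_ideal_mult_left by blast

lemma basic_open_mult: "basic_open (x * y) = basic_open x \<inter> basic_open y"
  unfolding basic_open_def using prime_idealD r_ideal_mult_left r_ideal_mult_right by blast

lemma basic_open_power: "basic_open x \<subseteq> basic_open (x ^ k)"
  unfolding basic_open_def using prime_ideal_power_not_mem by blast

lemma basic_open_add: "basic_open (x + y) \<subseteq> basic_open x \<union> basic_open y"
  unfolding basic_open_def using prime_idealD(1) r_ideal_add by blast

section \<open>Families that are a single fraction on a basic open set\<close>

definition is_frac_on ::
  "('r::comm_ring_1 \<Rightarrow> 'n::ab_group_add \<Rightarrow> 'n) \<Rightarrow> ('r set \<Rightarrow> ('n \<times> 'r) set) \<Rightarrow> 'r \<Rightarrow> 'n \<Rightarrow> 'r \<Rightarrow> bool" where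
  "is_frac_on sc \<gamma> x n s \<longleftrightarrow> (\<forall>p\<in>basic_open x. s \<notin> p \<and> \<gamma> p = frac sc (- p) n s)"

context module
begin

lemma r_ideal_annihilator: "r_ideal {t. t *s v = 0}"
  unfolding r_ideal_def by (auto simp: scale_left_distrib simp flip: scale_scale)

lemma is_frac_on_mono:
  "basic_open y \<subseteq> basic_open x \<Longrightarrow> is_frac_on scale \<gamma> x n s \<Longrightarrow> is_frac_on scale \<gamma> y n s"
  unfolding is_frac_on_def by blast

lemma is_frac_on_rescale:
  assumes "is_frac_on scale \<gamma> x n s"
  shows "is_frac_on scale \<gamma> x (x ^ k *s n) (x ^ k * s)"
  unfolding is_frac_on_def
proof
  fix p assume "p \<in> basic_open x"
  then have p: "prime_ideal p" "x ^ k \<notin> p" "s \<notin> p" "\<gamma> p = frac scale (- p) n s"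
    using assms prime_ideal_power_not_mem unfolding is_frac_on_def basic_open_def by auto
  then have "x ^ k * s \<notin> p"
    using prime_idealD(3) by blast
  moreover have "frac scale (- p) n s = frac scale (- p) (x ^ k *s n) (x ^ k * s)"
    using p \<open>x ^ k * s \<notin> p\<close>
    by (intro frac_eqI[OF mult_submonoid_compl_prime]) (simp_all add: mult.commute)
  ultimately show "x ^ k * s \<notin> p \<and> \<gamma> p = frac scale (- p) (x ^ k *s n) (x ^ k * s)"
    using p(4) by simp
qed

lemma is_frac_on_power_denom:
  assumes frac: "is_frac_on scale \<gamma> x n s"
  shows "\<exists>m k. is_frac_on scale \<gamma> x m (x ^ k)"
proof -
  have "\<exists>k. x ^ k \<in> range (\<lambda>r. r * s)"
  proof (rule ex_power_mem_if_mem_primes[OF r_ideal_principal])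
    fix q assume "prime_ideal q" "range (\<lambda>r. r * s) \<subseteq> q"
    moreover have "s \<in> range (\<lambda>r. r * s)"
      by (rule range_eqI[of _ _ 1]) simp
    ultimately show "x \<in> q"
      using frac unfolding is_frac_on_def basic_open_def by blast
  qed
  then obtain k c where c: "x ^ k = c * s"
    by blast
  have "is_frac_on scale \<gamma> x (c *s n) (x ^ k)"
    unfolding is_frac_on_def
  proof
    fix p assume "p \<in> basic_open x"
    then have p: "prime_ideal p" "x ^ k \<notin> p" "s \<notin> p" "\<gamma> p = frac scale (- p) n s"
      using frac prime_ideal_power_not_mem unfolding is_frac_on_def basic_open_def by auto
    moreover have "frac scale (- p) n s = frac scale (- p) (c *s n) (x ^ k)"
      using p by (intro frac_eqI[OF mult_submonoid_compl_prime]) (simp_all add: c mult.commute)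
    ultimately show "x ^ k \<notin> p \<and> \<gamma> p = frac scale (- p) (c *s n) (x ^ k)"
      by simp
  qed
  then show ?thesis
    by blast
qed

lemma is_frac_on_compatible:
  assumes "is_frac_on scale \<gamma> x n1 s1" "is_frac_on scale \<gamma> y n2 s2"
  shows "\<exists>T. (x * y) ^ T *s (s2 *s n1 - s1 *s n2) = 0"
proof -
  have "\<exists>T. (x * y) ^ T \<in> {t. t *s (s2 *s n1 - s1 *s n2) = 0}"
  proof (rule ex_power_mem_if_mem_primes[OF r_ideal_annihilator], rule ccontr)
    fix q assume q: "prime_ideal q" "{t. t *s (s2 *s n1 - s1 *s n2) = 0} \<subseteq> q" "x * y \<notin> q"
    then have "q \<in> basic_open x" "q \<in> basic_open y"
      using basic_open_mult unfolding basic_open_def by auto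
    then have "s1 \<notin> q" "s2 \<notin> q" "frac scale (- q) n1 s1 = frac scale (- q) n2 s2"
      using assms unfolding is_frac_on_def by auto
    then obtain t where "t \<notin> q" "t *s (s2 *s n1 - s1 *s n2) = 0"
      using frac_eq_iff[OF mult_submonoid_compl_prime[OF q(1)]] by auto
    then show False
      using q(2) by blast
  qed
  then show ?thesis
    by blast
qed

lemma is_frac_on_glue:
  assumes frac1: "is_frac_on scale \<gamma> x n1 s1" and frac2: "is_frac_on scale \<gamma> y n2 s2"
    and cross: "s2 *s n1 = s1 *s n2" and bezout: "(x + y) ^ N = c1 * s1 + c2 * s2"
  shows "is_frac_on scale \<gamma> (x + y) (c1 *s n1 + c2 *s n2) ((x + y) ^ N)"
  unfolding is_frac_on_def
proof
  let ?m = "c1 *s n1 + c2 *s n2"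
  have eq1: "(x + y) ^ N *s n1 = s1 *s ?m"
  proof -
    have "s1 *s ?m = c1 *s (s1 *s n1) + c2 *s (s1 *s n2)"
      by (simp only: scale_right_distrib scale_left_commute[of s1])
    also have "\<dots> = c1 *s (s1 *s n1) + c2 *s (s2 *s n1)"
      by (simp only: cross)
    finally show ?thesis
      by (simp add: bezout scale_left_distrib)
  qed
  have eq2: "(x + y) ^ N *s n2 = s2 *s ?m"
  proof -
    have "s2 *s ?m = c1 *s (s2 *s n1) + c2 *s (s2 *s n2)"
      by (simp only: scale_right_distrib scale_left_commute[of s2])
    also have "\<dots> = c1 *s (s1 *s n2) + c2 *s (s2 *s n2)"
      by (simp only: cross)
    finally show ?thesis
      by (simp add: bezout scale_left_distrib)
  qed
  fix p assume p: "p \<in> basic_open (x + y)"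
  then have S: "mult_submonoid (- p)" and xyN: "(x + y) ^ N \<in> - p"
    using mult_submonoid_compl_prime prime_ideal_power_not_mem unfolding basic_open_def by auto
  have "p \<in> basic_open x \<or> p \<in> basic_open y"
    using p basic_open_add by blast
  then have "\<gamma> p = frac scale (- p) ?m ((x + y) ^ N)"
  proof
    assume "p \<in> basic_open x"
    then show ?thesis
      using frac1 frac_eqI[OF S _ xyN eq1] unfolding is_frac_on_def by simp
  next
    assume "p \<in> basic_open y"
    then show ?thesis
      using frac2 frac_eqI[OF S _ xyN eq2] unfolding is_frac_on_def by simp
  qed
  then show "(x + y) ^ N \<notin> p \<and> \<gamma> p = frac scale (- p) ?m ((x + y) ^ N)"
    using xyN by simp
qed

lemma is_frac_on_add:
  assumes "is_frac_on scale \<gamma> x n1 s1" "is_frac_on scale \<gamma> y n2 s2"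
  shows "\<exists>n s. is_frac_on scale \<gamma> (x + y) n s"
proof -
  obtain m1 k1 where frac1: "is_frac_on scale \<gamma> x m1 (x ^ k1)"
    using is_frac_on_power_denom[OF assms(1)] by blast
  obtain m2 k2 where frac2: "is_frac_on scale \<gamma> y m2 (y ^ k2)"
    using is_frac_on_power_denom[OF assms(2)] by blast
  obtain T where T: "(x * y) ^ T *s (y ^ k2 *s m1 - x ^ k1 *s m2) = 0"
    using is_frac_on_compatible[OF frac1 frac2] by blast
  \<comment> \<open>rescaling by \<open>x ^ T\<close> and \<open>y ^ T\<close> turns the compatibility into an exact cross relation\<close>
  let ?X = "x ^ T * x ^ k1" and ?Y = "y ^ T * y ^ k2"
  have "?Y *s (x ^ T *s m1) - ?X *s (y ^ T *s m2) = (x * y) ^ T *s (y ^ k2 *s m1 - x ^ k1 *s m2)"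
    by (simp add: scale_right_diff_distrib power_mult_distrib mult_ac)
  then have cross: "?Y *s (x ^ T *s m1) = ?X *s (y ^ T *s m2)"
    using T by simp
  let ?J = "ideal_adjoin (range (\<lambda>r. r * ?X)) ?Y"
  have "\<exists>N. (x + y) ^ N \<in> ?J"
  proof (rule ex_power_mem_if_mem_primes[OF r_ideal_ideal_adjoin[OF r_ideal_principal]])
    fix q assume q: "prime_ideal q" "?J \<subseteq> q"
    have "?X \<in> range (\<lambda>r. r * ?X)"
      by (rule range_eqI[of _ _ 1]) simp
    then have "?X \<in> ?J"
      by (rule subsetD[OF subset_ideal_adjoin])
    moreover have "?Y \<in> ?J"
      by (rule mem_ideal_adjoin[OF r_ideal_zero[OF r_ideal_principal]])
    ultimately have "x ^ (T + k1) \<in> q" "y ^ (T + k2) \<in> q"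
      using q(2) by (auto simp: power_add)
    then have "x \<in> q" "y \<in> q"
      using prime_ideal_power_not_mem[OF q(1)] by blast+
    then show "x + y \<in> q"
      using r_ideal_add[OF prime_idealD(1)[OF q(1)]] by blast
  qed
  then obtain N c1 c2 where "(x + y) ^ N = c1 * ?X + c2 * ?Y"
    unfolding ideal_adjoin_def by auto
  moreover have "is_frac_on scale \<gamma> x (x ^ T *s m1) ?X" "is_frac_on scale \<gamma> y (y ^ T *s m2) ?Y"
    by (rule is_frac_on_rescale[OF frac1], rule is_frac_on_rescale[OF frac2])
  ultimately show ?thesis
    using is_frac_on_glue[OF _ _ cross] by blast
qed

lemma r_ideal_is_frac_on: "r_ideal {x. \<exists>n s. is_frac_on scale \<gamma> x n s}"
  unfolding r_ideal_def
proof (intro conjI ballI allI)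
  show "0 \<in> {x. \<exists>n s. is_frac_on scale \<gamma> x n s}"
    by (simp add: is_frac_on_def basic_open_zero)
next
  fix x y assume "x \<in> {x. \<exists>n s. is_frac_on scale \<gamma> x n s}" "y \<in> {x. \<exists>n s. is_frac_on scale \<gamma> x n s}"
  then show "x + y \<in> {x. \<exists>n s. is_frac_on scale \<gamma> x n s}"
    using is_frac_on_add by blast
next
  fix r x assume "x \<in> {x. \<exists>n s. is_frac_on scale \<gamma> x n s}"
  then show "r * x \<in> {x. \<exists>n s. is_frac_on scale \<gamma> x n s}"
    using is_frac_on_mono[OF basic_open_mult_left] by blast
qed

end

section \<open>Prime submodules and the Zariski topology\<close>

lemma colon_r_ideal:
  assumes "module sc" "submod sc L"
  shows "r_ideal (colon sc L)"
proof -
  interpret module sc by fact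
  have L: "0 \<in> L" "\<And>x y. x \<in> L \<Longrightarrow> y \<in> L \<Longrightarrow> x + y \<in> L" "\<And>c x. x \<in> L \<Longrightarrow> sc c x \<in> L"
    using assms(2) unfolding submod_def by auto
  have "0 \<in> colon sc L"
    using L unfolding colon_def by simp
  moreover have "x + y \<in> colon sc L" if "x \<in> colon sc L" "y \<in> colon sc L" for x y
    using that L unfolding colon_def by (simp add: scale_left_distrib)
  moreover have "r * x \<in> colon sc L" if "x \<in> colon sc L" for r x
    using that L unfolding colon_def by (simp add: mult.commute flip: scale_scale)
  ultimately show ?thesis
    unfolding r_ideal_def by blast
qed

lemma colon_prime_ideal:
  assumes "module sc" "P \<in> mSpec sc"
  shows "prime_ideal (colon sc P)"
proof -
  interpret module sc by fact
  have P: "submod sc P" "P \<noteq> UNIV" "\<And>r m. sc r m \<in> P \<Longrightarrow> r \<in> colon sc P \<or> m \<in> P"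
    using assms(2) unfolding mSpec_def prime_submodule_def by auto
  have "1 \<notin> colon sc P"
    using P(2) unfolding colon_def by auto
  moreover have "x \<in> colon sc P \<or> y \<in> colon sc P" if xy: "x * y \<in> colon sc P" for x y
  proof (cases "y \<in> colon sc P")
    case False
    then obtain m where "sc y m \<notin> P"
      unfolding colon_def by auto
    moreover have "sc x (sc y m) \<in> P"
      using xy unfolding colon_def by simp
    ultimately show ?thesis
      using P(3) by blast
  qed simp
  ultimately show ?thesis
    unfolding prime_ideal_def using colon_r_ideal[OF assms(1) P(1)] by blast
qed

lemma mem_compl_zV_principal_iff:
  assumes "module sc" "colon sc L = range (\<lambda>r. r * b)"
  shows "P \<in> mSpec sc - zV sc L \<longleftrightarrow> P \<in> mSpec sc \<and> b \<notin> colon sc P"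
proof (cases "P \<in> mSpec sc")
  case True
  have "b \<in> colon sc L"
    using assms(2) by (metis mult_1 rangeI)
  moreover have "colon sc L \<subseteq> colon sc P" if "b \<in> colon sc P"
    using that assms(2) prime_idealD(1)[OF colon_prime_ideal[OF assms(1) True]] r_ideal_mult_left by auto
  ultimately show ?thesis
    using True unfolding zV_def by auto
qed simp

lemma faithful_primeful_colon_onto:
  fixes sc :: "'r::comm_ring_1 \<Rightarrow> 'm::ab_group_add \<Rightarrow> 'm"
  assumes "faithful sc" "primeful sc" "mSpec sc \<noteq> {}" "prime_ideal p"
  shows "\<exists>P\<in>mSpec sc. colon sc P = p"
proof -
  obtain P where "prime_submodule sc P"
    using assms(3) unfolding mSpec_def by blast
  then have "0 \<in> P" "P \<noteq> UNIV"
    unfolding prime_submodule_def submod_def by auto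
  then have "(UNIV :: 'm set) \<noteq> {0}"
    by (metis UNIV_I singletonD subsetI subset_antisym)
  moreover have "annih sc \<subseteq> p"
    using assms(1) prime_idealD(1)[OF assms(4)] r_ideal_zero unfolding faithful_def by auto
  ultimately show ?thesis
    using assms(2,4) unfolding primeful_def by blast
qed

section \<open>Sections over the complement of \<open>V(K)\<close>\<close>

locale pid_module_basic_open =
  fixes scM :: "'r::idom \<Rightarrow> 'm::ab_group_add \<Rightarrow> 'm"
    and scN :: "'r \<Rightarrow> 'n::ab_group_add \<Rightarrow> 'n"
    and K :: "'m set" and a :: 'r
  assumes module_M: "module scM" and module_N: "module scN"
    and pid: "is_pid TYPE('r)"
    and colon_onto: "\<And>p. prime_ideal p \<Longrightarrow> \<exists>P\<in>mSpec scM. colon scM P = p"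
    and submod_K: "submod scM K" and colon_K: "colon scM K = range (\<lambda>r. r * a)"
begin

sublocale N: module scN
  by (rule module_N)

abbreviation U :: "'m set set" where
  "U \<equiv> mSpec scM - zV scM K"

lemma mem_U_iff: "P \<in> U \<longleftrightarrow> P \<in> mSpec scM \<and> colon scM P \<in> basic_open a"
  using mem_compl_zV_principal_iff[OF module_M colon_K] colon_prime_ideal[OF module_M]
  unfolding basic_open_def by blast

lemma Supp_U: "Supp scM U = basic_open a"
  unfolding Supp_def using mem_U_iff colon_onto unfolding basic_open_def by fastforce

definition frac_section :: "'n \<Rightarrow> nat \<Rightarrow> 'r set \<Rightarrow> ('n \<times> 'r) set" where
  "frac_section n k = (\<lambda>p. if p \<in> basic_open a then frac scN (- p) n (a ^ k) else {})"

lemma frac_section_is_frac_on: "is_frac_on scN (frac_section n k) a n (a ^ k)"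
  unfolding is_frac_on_def frac_section_def basic_open_def
  using prime_ideal_power_not_mem by auto

lemma frac_section_mem_sections: "frac_section n k \<in> sections scM scN U"
  unfolding sections_def Supp_U
proof (intro CollectI conjI ballI allI impI)
  fix p assume "p \<in> basic_open a"
  then show "frac_section n k p \<in> loc_carrier scN (- p)"
    using frac_section_is_frac_on unfolding is_frac_on_def loc_carrier_def by blast
next
  fix p assume "p \<notin> basic_open a"
  then show "frac_section n k p = {}"
    unfolding frac_section_def by simp
next
  fix Q assume "Q \<in> U"
  moreover have "zopen scM U"
    unfolding zopen_def using submod_K by blast
  moreover have "\<forall>P\<in>U. a ^ k \<notin> colon scM P \<and>
      frac_section n k (colon scM P) = frac scN (- colon scM P) n (a ^ k)"
    using mem_U_iff frac_section_is_frac_on unfolding is_frac_on_def by blast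
  ultimately show "\<exists>W. zopen scM W \<and> Q \<in> W \<and> W \<subseteq> U \<and> (\<exists>s m. \<forall>P\<in>W. s \<notin> colon scM P \<and>
      frac_section n k (colon scM P) = frac scN (- colon scM P) m s)"
    by blast
qed

lemma frac_section_eq_iff:
  "frac_section n k = frac_section n' k' \<longleftrightarrow>
     frac scN (S_pow a) n (a ^ k) = frac scN (S_pow a) n' (a ^ k')"
proof
  assume "frac_section n k = frac_section n' k'"
  then have "is_frac_on scN (frac_section n k) a n' (a ^ k')"
    using frac_section_is_frac_on[of n' k'] by simp
  then obtain T where T: "scN ((a * a) ^ T) (scN (a ^ k') n - scN (a ^ k) n') = 0"
    using N.is_frac_on_compatible[OF frac_section_is_frac_on] by blast
  moreover have "(a * a) ^ T \<in> S_pow a"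
    by (metis power_add power_mult_distrib rangeI)
  ultimately show "frac scN (S_pow a) n (a ^ k) = frac scN (S_pow a) n' (a ^ k')"
    using N.frac_eq_iff[OF mult_submonoid_powers rangeI rangeI] by blast
next
  assume "frac scN (S_pow a) n (a ^ k) = frac scN (S_pow a) n' (a ^ k')"
  then obtain e where e: "scN (a ^ e) (scN (a ^ k') n - scN (a ^ k) n') = 0"
    using N.frac_eq_iff[OF mult_submonoid_powers rangeI rangeI] by blast
  have "frac scN (- p) n (a ^ k) = frac scN (- p) n' (a ^ k')" if "p \<in> basic_open a" for p
  proof -
    have "prime_ideal p" "\<And>i. a ^ i \<in> - p"
      using that prime_ideal_power_not_mem unfolding basic_open_def by auto
    then show ?thesis
      using N.frac_eq_iff[OF mult_submonoid_compl_prime] e by blast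
  qed
  then show "frac_section n k = frac_section n' k'"
    unfolding frac_section_def by (intro ext) simp
qed

lemma sec_add_frac_section:
  "sec_add scM scN U (frac_section n k) (frac_section n' k') =
     frac_section (scN (a ^ k') n + scN (a ^ k) n') (k + k')"
proof
  fix p
  show "sec_add scM scN U (frac_section n k) (frac_section n' k') p =
      frac_section (scN (a ^ k') n + scN (a ^ k) n') (k + k') p"
  proof (cases "p \<in> basic_open a")
    case True
    then have "prime_ideal p" "\<And>i. a ^ i \<in> - p"
      using prime_ideal_power_not_mem unfolding basic_open_def by auto
    then show ?thesis
      using True N.loc_add_frac[OF mult_submonoid_compl_prime]
      unfolding sec_add_def Supp_U frac_section_def by (simp add: power_add)
  qed (simp add: sec_add_def Supp_U frac_section_def)
qed

lemma sec_scale_frac_section: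
  "sec_scale scM scN U r (frac_section n k) = frac_section (scN r n) k"
proof
  fix p
  show "sec_scale scM scN U r (frac_section n k) p = frac_section (scN r n) k p"
  proof (cases "p \<in> basic_open a")
    case True
    then have "prime_ideal p" "a ^ k \<in> - p"
      using prime_ideal_power_not_mem unfolding basic_open_def by auto
    then show ?thesis
      using True N.loc_scale_frac[OF mult_submonoid_compl_prime]
      unfolding sec_scale_def Supp_U frac_section_def by simp
  qed (simp add: sec_scale_def Supp_U frac_section_def)
qed

lemma sections_locally_frac:
  assumes "\<gamma> \<in> sections scM scN U" "p \<in> basic_open a"
  shows "\<exists>b. p \<in> basic_open b \<and> (\<exists>n s. is_frac_on scN \<gamma> b n s)"
proof -
  obtain Q where Q: "Q \<in> U" "p = colon scM Q"
    using assms(2) Supp_U unfolding Supp_def by blast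
  obtain W s n where W: "zopen scM W" "Q \<in> W" "W \<subseteq> U"
    and frac_W: "\<forall>P\<in>W. s \<notin> colon scM P \<and> \<gamma> (colon scM P) = frac scN (- colon scM P) n s"
    using assms(1) Q(1) unfolding sections_def by blast
  obtain L where L: "submod scM L" "W = mSpec scM - zV scM L"
    using W(1) unfolding zopen_def by blast
  obtain b where b: "colon scM L = range (\<lambda>r. r * b)"
    using pid colon_r_ideal[OF module_M L(1)] unfolding is_pid_def by blast
  have mem_W_iff: "P \<in> W \<longleftrightarrow> P \<in> mSpec scM \<and> b \<notin> colon scM P" for P
    using mem_compl_zV_principal_iff[OF module_M b] L(2) by simp
  have "p \<in> basic_open b"
    using mem_W_iff[of Q] W(2) Q colon_prime_ideal[OF module_M] unfolding basic_open_def by auto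
  moreover have "is_frac_on scN \<gamma> b n s"
    unfolding is_frac_on_def
  proof
    fix q assume "q \<in> basic_open b"
    then obtain P where "P \<in> mSpec scM" "colon scM P = q" "b \<notin> q"
      using colon_onto unfolding basic_open_def by blast
    then show "s \<notin> q \<and> \<gamma> q = frac scN (- q) n s"
      using frac_W mem_W_iff by blast
  qed
  ultimately show ?thesis
    by blast
qed

lemma sections_eq_frac_section:
  assumes \<gamma>: "\<gamma> \<in> sections scM scN U"
  shows "\<exists>n k. \<gamma> = frac_section n k"
proof -
  have "\<exists>j. a ^ j \<in> {x. \<exists>n s. is_frac_on scN \<gamma> x n s}"
  proof (rule ex_power_mem_if_mem_primes[OF N.r_ideal_is_frac_on], rule ccontr)
    fix q assume "prime_ideal q" "{x. \<exists>n s. is_frac_on scN \<gamma> x n s} \<subseteq> q" "a \<notin> q"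
    then show False
      using sections_locally_frac[OF \<gamma>, of q] unfolding basic_open_def by blast
  qed
  then obtain j n s where "is_frac_on scN \<gamma> (a ^ j) n s"
    by blast
  then have "is_frac_on scN \<gamma> a n s"
    by (rule N.is_frac_on_mono[OF basic_open_power])
  then obtain m k where frac_a: "is_frac_on scN \<gamma> a m (a ^ k)"
    using N.is_frac_on_power_denom by blast
  have "\<gamma> p = frac_section m k p" for p
  proof (cases "p \<in> basic_open a")
    case True
    then show ?thesis
      using frac_a unfolding is_frac_on_def frac_section_def by simp
  next
    case False
    then show ?thesis
      using \<gamma> Supp_U unfolding sections_def frac_section_def by simp
  qed
  then show ?thesis
    by blast
qed

definition to_loc :: "('r set \<Rightarrow> ('n \<times> 'r) set) \<Rightarrow> ('n \<times> 'r) set" where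
  "to_loc \<gamma> = (SOME x. \<exists>n k. \<gamma> = frac_section n k \<and> x = frac scN (S_pow a) n (a ^ k))"

lemma to_loc_frac_section: "to_loc (frac_section n k) = frac scN (S_pow a) n (a ^ k)"
proof -
  let ?P = "\<lambda>x. \<exists>n' k'. frac_section n k = frac_section n' k' \<and> x = frac scN (S_pow a) n' (a ^ k')"
  have "?P (to_loc (frac_section n k))"
    unfolding to_loc_def by (rule someI[of ?P]) blast
  then show ?thesis
    using frac_section_eq_iff by auto
qed

lemma sections_iso_loc: "sections_iso_loc scM scN U a"
proof -
  have pow: "a ^ k \<in> S_pow a" for k
    by (rule rangeI)
  show ?thesis
    unfolding sections_iso_loc_def
  proof (intro exI conjI ballI allI)
    show "bij_betw to_loc (sections scM scN U) (loc_carrier scN (S_pow a))"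
    proof (rule bij_betw_imageI)
      show "inj_on to_loc (sections scM scN U)"
      proof (rule inj_onI)
        fix \<gamma> \<delta> assume "\<gamma> \<in> sections scM scN U" "\<delta> \<in> sections scM scN U" "to_loc \<gamma> = to_loc \<delta>"
        moreover from this obtain n k n' k' where "\<gamma> = frac_section n k" "\<delta> = frac_section n' k'"
          using sections_eq_frac_section by meson
        ultimately show "\<gamma> = \<delta>"
          by (simp add: to_loc_frac_section frac_section_eq_iff)
      qed
      show "to_loc ` sections scM scN U = loc_carrier scN (S_pow a)"
      proof (intro equalityI subsetI)
        fix x assume "x \<in> to_loc ` sections scM scN U"
        then obtain n k where "x = to_loc (frac_section n k)"
          using sections_eq_frac_section by blast
        then show "x \<in> loc_carrier scN (S_pow a)"
          unfolding to_loc_frac_section loc_carrier_def using pow by blast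
      next
        fix x assume "x \<in> loc_carrier scN (S_pow a)"
        then obtain n k where "x = to_loc (frac_section n k)"
          unfolding to_loc_frac_section loc_carrier_def by blast
        then show "x \<in> to_loc ` sections scM scN U"
          using frac_section_mem_sections by blast
      qed
    qed
  next
    fix \<gamma> \<delta> assume "\<gamma> \<in> sections scM scN U" "\<delta> \<in> sections scM scN U"
    then obtain n k n' k' where "\<gamma> = frac_section n k" "\<delta> = frac_section n' k'"
      using sections_eq_frac_section by meson
    then show "to_loc (sec_add scM scN U \<gamma> \<delta>) = loc_add scN (S_pow a) (to_loc \<gamma>) (to_loc \<delta>)"
      by (simp add: sec_add_frac_section to_loc_frac_section N.loc_add_frac[OF mult_submonoid_powers pow pow]
          power_add)
  next
    fix r \<gamma> assume "\<gamma> \<in> sections scM scN U"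
    then obtain n k where "\<gamma> = frac_section n k"
      using sections_eq_frac_section by blast
    then show "to_loc (sec_scale scM scN U r \<gamma>) = loc_scale scN (S_pow a) r (to_loc \<gamma>)"
      by (simp add: sec_scale_frac_section to_loc_frac_section N.loc_scale_frac[OF mult_submonoid_powers pow])
  qed
qed

end

theorem corollary3p17:
  fixes scM :: "'r::idom \<Rightarrow> 'm::ab_group_add \<Rightarrow> 'm"
    and scN :: "'r \<Rightarrow> 'n::ab_group_add \<Rightarrow> 'n"
    and K :: "'m set"
  assumes "is_pid TYPE('r)"
    and "is_module scM" and "faithful scM" and "primeful scM" and "mSpec scM \<noteq> {}"
    and "is_module scN"
    and "submod scM K"
  shows "\<exists>a. sections_iso_loc scM scN (mSpec scM - zV scM K) a"
proof -
  have M: "module scM" and N: "module scN"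
    using assms(2,6) unfolding is_module_def by auto
  obtain a where "colon scM K = range (\<lambda>r. r * a)"
    using assms(1) colon_r_ideal[OF M assms(7)] unfolding is_pid_def by blast
  then interpret pid_module_basic_open scM scN K a
    unfolding pid_module_basic_open_def
    using M N assms(1,7) faithful_primeful_colon_onto[OF assms(3-5)] by blast
  show ?thesis
    using sections_iso_loc by blast
qed

end
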